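(* Let $\lambda$ be a sufficiently large constant, let $d=np\ge\lambda n^{1/2}$, and let $\delta<1/10$. Then with probability $1-o(1)$ (as $n\to\infty$) the random graph $G(n,p)$ has the following property: for every partition $P_0,N_0$ of $V_n$ with $|P_0|\ge n(1-\delta)$, if majority dynamics is started with all vertices of $P_0$ in state $+1$ and all vertices of $N_0$ in state $-1$, then after two rounds all vertices have the same state.
   Context: $G(n,p)$ is the binomial random graph on $V_n=\{1,\dots,n\}$ (each pair an edge independently with probability $p$). Majority dynamics: states $S_t(v)\in\{-1,+1\}$, with $S_{t+1}(v)=\operatorname{sgn}(\sum_{u\in N(v)}S_t(u))$ if this sum is nonzero and $S_{t+1}(v)=S_t(v)$ otherwise, where $N(v)$ is the neighbourhood of $v$. *)

theory Defs
  imports "HOL-Probability.Probability"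
begin

definition V :: "nat \<Rightarrow> nat set" where "V n = {1..n}"

definition gnp :: "nat \<Rightarrow> real \<Rightarrow> (nat \<times> nat \<Rightarrow> bool) pmf" where
  "gnp n p = Pi_pmf {(i,j). i \<in> V n \<and> j \<in> V n \<and> i < j} False (\<lambda>_. bernoulli_pmf p)"

definition adj :: "(nat \<times> nat \<Rightarrow> bool) \<Rightarrow> nat \<Rightarrow> nat \<Rightarrow> bool" where
  "adj G u v = ((u < v \<and> G (u,v)) \<or> (v < u \<and> G (v,u)))"

definition nbhd :: "nat \<Rightarrow> (nat \<times> nat \<Rightarrow> bool) \<Rightarrow> nat \<Rightarrow> nat set" where
  "nbhd n G v = {u \<in> V n. adj G u v}"

definition maj_step :: "nat \<Rightarrow> (nat \<times> nat \<Rightarrow> bool) \<Rightarrow> (nat \<Rightarrow> int) \<Rightarrow> (nat \<Rightarrow> int)" where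
  "maj_step n G S = (\<lambda>v. let s = (\<Sum>u\<in>nbhd n G v. S u) in
      if s > 0 then 1 else if s < 0 then -1 else S v)"

definition init_state :: "nat set \<Rightarrow> nat \<Rightarrow> int" where
  "init_state P0 = (\<lambda>v. if v \<in> P0 then 1 else -1)"

definition two_round_consensus :: "real \<Rightarrow> nat \<Rightarrow> (nat \<times> nat \<Rightarrow> bool) \<Rightarrow> bool" where
  "two_round_consensus \<delta> n G =
    (\<forall>P0. P0 \<subseteq> V n \<longrightarrow> real (card P0) \<ge> real n * (1 - \<delta>) \<longrightarrow>
       (\<exists>c. \<forall>v\<in>V n. maj_step n G (maj_step n G (init_state P0)) v = c))"

end

theory Submission
  imports Defs "HOL-Real_Asymp.Real_Asymp"
begin

(* Fix k = ceil (sqrt n). A vertex with more than 2k neighbours is in state +1 after round two as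
   soon as fewer than k vertices fail to be +1 after round one. The latter holds if, for every
   initial set P of +1 vertices missing at most n/10 vertices, every k-set T receives a positive
   total first-round vote from P: any k vertices that did not turn +1 each saw a nonpositive vote.
   Both the degree condition and the vote condition are sums of independent edge indicators with
   weights in [-2, 2], so an exponential-moment (Chernoff) bound applies. For np >= 100 sqrt n a
   fixed vertex has degree at most 2k with probability at most exp (1 - 12 sqrt n), and a fixed pair
   (P, T) fails with probability at most exp (-4n), which beats the at most 4^n such pairs. *)

lemma exp_le_one_plus_self_plus_square:
  fixes x :: real
  assumes "\<bar>x\<bar> \<le> 1"
  shows "exp x \<le> 1 + x + x\<^sup>2"
proof (cases "x \<ge> 0")
  case True
  then show ?thesis using assms by (intro exp_bound) auto
next
  case False
  define y where "y = - x"
  have y: "0 \<le> y" "y \<le> 1" using False assms by (auto simp: y_def)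
  have "(1 - y + y\<^sup>2) * (1 + y + y\<^sup>2 / 2) = 1 + (y\<^sup>2 + y ^ 3 + y ^ 4) / 2"
    by (simp add: field_simps power2_eq_square power3_eq_cube power4_eq_xxxx)
  then have "1 \<le> (1 - y + y\<^sup>2) * (1 + y + y\<^sup>2 / 2)"
    using y by simp
  also have "\<dots> \<le> (1 - y + y\<^sup>2) * exp y"
    using y zero_le_power2[of y] by (intro mult_left_mono exp_lower_Taylor_quadratic) auto
  finally have "exp (- y) \<le> 1 - y + y\<^sup>2"
    by (simp add: exp_minus field_simps)
  then show ?thesis by (simp add: y_def)
qed

lemma bernoulli_mgf_le:
  fixes p x :: real
  assumes "0 \<le> p" "p \<le> 1" "\<bar>x\<bar> \<le> 1"
  shows "exp x * p + (1 - p) \<le> exp (p * (x + x\<^sup>2))"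
proof -
  have "exp x * p + (1 - p) = 1 + p * (exp x - 1)" by (simp add: algebra_simps)
  also have "\<dots> \<le> 1 + p * (x + x\<^sup>2)"
    using exp_le_one_plus_self_plus_square[OF assms(3)] assms(1)
    by (intro add_left_mono mult_left_mono) auto
  also have "\<dots> \<le> exp (p * (x + x\<^sup>2))" by (rule exp_ge_add_one_self)
  finally show ?thesis .
qed

lemma prob_Pi_bernoulli_weighted_sum_ge:
  fixes w :: "'a \<Rightarrow> real" and \<theta> c p :: real
  assumes I: "finite I" and p: "0 \<le> p" "p \<le> 1" and \<theta>: "0 \<le> \<theta>"
    and w: "\<And>i. i \<in> I \<Longrightarrow> \<bar>\<theta> * w i\<bar> \<le> 1"
  shows "measure_pmf.prob (Pi_pmf I d (\<lambda>_. bernoulli_pmf p))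
           {X. c \<le> (\<Sum>i\<in>I. if X i then w i else 0)}
         \<le> exp (p * (\<Sum>i\<in>I. \<theta> * w i + (\<theta> * w i)\<^sup>2) - \<theta> * c)"
proof -
  let ?M = "Pi_pmf I d (\<lambda>_. bernoulli_pmf p)"
  define S where "S X = (\<Sum>i\<in>I. if X i then w i else 0)" for X
  define f where "f i b = exp (\<theta> * (if b then w i else 0))" for i b
  have exp_S: "exp (\<theta> * (S X - c)) = exp (- \<theta> * c) * (\<Prod>i\<in>I. f i (X i))" for X
    by (simp add: S_def f_def sum_distrib_left exp_sum[OF I, symmetric] exp_add[symmetric]
        algebra_simps)
  have int_prod: "integrable ?M (\<lambda>X. \<Prod>i\<in>I. f i (X i))"
    by (intro integrable_prod_Pi_pmf I) (auto simp: integrable_measure_pmf_finite)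
  have "measure_pmf.prob ?M {X. c \<le> S X} = measure_pmf.expectation ?M (indicator {X. c \<le> S X})"
    by simp
  also have "\<dots> \<le> measure_pmf.expectation ?M (\<lambda>X. exp (\<theta> * (S X - c)))"
  proof (rule integral_mono)
    show "integrable ?M (\<lambda>X. exp (\<theta> * (S X - c)))"
      unfolding exp_S using int_prod by simp
    show "indicator {X. c \<le> S X} X \<le> exp (\<theta> * (S X - c))" for X
      using \<theta> by (auto simp: indicator_def)
  qed (auto intro: measure_pmf.integrable_const_bound[where B = 1])
  also have "\<dots> = exp (- \<theta> * c) * (\<Prod>i\<in>I. exp (\<theta> * w i) * p + (1 - p))"
    unfolding exp_S using p
    by (subst integral_mult_right_zero, subst expectation_prod_Pi_pmf)
       (auto simp: I f_def integrable_measure_pmf_finite)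
  also have "\<dots> \<le> exp (- \<theta> * c) * (\<Prod>i\<in>I. exp (p * (\<theta> * w i + (\<theta> * w i)\<^sup>2)))"
    using p by (intro mult_left_mono prod_mono conjI bernoulli_mgf_le w) auto
  also have "\<dots> = exp (p * (\<Sum>i\<in>I. \<theta> * w i + (\<theta> * w i)\<^sup>2) - \<theta> * c)"
    by (simp add: exp_sum[OF I, symmetric] sum_distrib_left exp_diff exp_minus field_simps)
  finally show ?thesis by (simp add: S_def)
qed

definition edge_slots :: "nat \<Rightarrow> (nat \<times> nat) set" where
  "edge_slots n = {(i, j). i \<in> V n \<and> j \<in> V n \<and> i < j}"

lemma gnp_eq_Pi_pmf_edge_slots: "gnp n p = Pi_pmf (edge_slots n) False (\<lambda>_. bernoulli_pmf p)"
  by (simp add: gnp_def edge_slots_def)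

lemma finite_V [simp]: "finite (V n)"
  by (simp add: V_def)

lemma card_V [simp]: "card (V n) = n"
  by (simp add: V_def)

lemma finite_edge_slots [simp]: "finite (edge_slots n)"
  by (rule finite_subset[of _ "V n \<times> V n"]) (auto simp: edge_slots_def)

lemma nbhd_subset_V: "nbhd n G v \<subseteq> V n"
  by (auto simp: nbhd_def)

lemma finite_nbhd [simp]: "finite (nbhd n G v)"
  by (simp add: nbhd_def)

lemma nbhd_complete_graph: "v \<in> V n \<Longrightarrow> nbhd n (\<lambda>_. True) v = V n - {v}"
  by (auto simp: nbhd_def adj_def)

definition edge_weight :: "(nat \<Rightarrow> 'a::comm_monoid_add) \<Rightarrow> nat set \<Rightarrow> nat \<times> nat \<Rightarrow> 'a" where
  "edge_weight f T e =
     (if snd e \<in> T then f (fst e) else 0) + (if fst e \<in> T then f (snd e) else 0)"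

lemma sum_nbhd_eq_sum_edge_slots:
  fixes f :: "nat \<Rightarrow> 'a::comm_monoid_add"
  assumes T: "T \<subseteq> V n"
  shows "(\<Sum>v\<in>T. \<Sum>u\<in>nbhd n G v. f u) = (\<Sum>e\<in>edge_slots n. if G e then edge_weight f T e else 0)"
proof -
  define L where "L = {e \<in> edge_slots n. G e \<and> snd e \<in> T}"
  define R where "R = {e \<in> edge_slots n. G e \<and> fst e \<in> T}"
  have fin: "finite L" "finite R" "finite T"
    using finite_subset[OF T] by (auto simp: L_def R_def)
  have pair_in: "(v, u) \<in> prod.swap ` L \<union> R" if "v \<in> T" "u \<in> nbhd n G v" for v u
  proof (cases "u < v")
    case True
    then have "(u, v) \<in> L"
      using that T by (auto simp: L_def edge_slots_def nbhd_def adj_def)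
    then show ?thesis
      by (auto intro: rev_image_eqI)
  next
    case False
    then have "(v, u) \<in> R"
      using that T by (auto simp: R_def edge_slots_def nbhd_def adj_def)
    then show ?thesis
      by simp
  qed
  moreover have "prod.swap ` L \<union> R \<subseteq> Sigma T (nbhd n G)"
    by (auto simp: L_def R_def edge_slots_def nbhd_def adj_def)
  ultimately have Sigma_eq: "Sigma T (nbhd n G) = prod.swap ` L \<union> R"
    using pair_in unfolding set_eq_iff by (metis SigmaE subsetD)
  have "(\<Sum>v\<in>T. \<Sum>u\<in>nbhd n G v. f u) = (\<Sum>x\<in>Sigma T (nbhd n G). f (snd x))"
    using fin by (simp add: sum.Sigma split_def)
  also have "\<dots> = (\<Sum>x\<in>prod.swap ` L. f (snd x)) + (\<Sum>x\<in>R. f (snd x))"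
    unfolding Sigma_eq using fin by (intro sum.union_disjoint) (auto simp: L_def R_def edge_slots_def)
  also have "(\<Sum>x\<in>prod.swap ` L. f (snd x)) = (\<Sum>e\<in>L. f (fst e))"
    by (subst sum.reindex) (auto intro: inj_on_subset[OF swap_inj_on])
  also have "(\<Sum>e\<in>L. f (fst e)) + (\<Sum>e\<in>R. f (snd e))
      = (\<Sum>e\<in>edge_slots n. (if G e \<and> snd e \<in> T then f (fst e) else 0)
                           + (if G e \<and> fst e \<in> T then f (snd e) else 0))"
    by (simp add: L_def R_def sum.inter_filter sum.distrib)
  also have "\<dots> = (\<Sum>e\<in>edge_slots n. if G e then edge_weight f T e else 0)"
    by (intro sum.cong) (auto simp: edge_weight_def)
  finally show ?thesis .
qed

lemma sum_edge_weight:
  "T \<subseteq> V n \<Longrightarrow> (\<Sum>e\<in>edge_slots n. edge_weight f T e) = (\<Sum>v\<in>T. \<Sum>u\<in>V n - {v}. f u)"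
  using sum_nbhd_eq_sum_edge_slots[where G = "\<lambda>_. True" and f = f]
  by (simp add: nbhd_complete_graph subset_iff cong: sum.cong)

lemma sum_edge_weight_one:
  assumes "T \<subseteq> V n"
  shows "(\<Sum>e\<in>edge_slots n. edge_weight (\<lambda>_. 1) T e) = real (card T) * (real n - 1)"
proof -
  have "real (card (V n - {v})) = real n - 1" if "v \<in> T" for v
  proof -
    have "v \<in> V n" using that assms by blast
    then have "1 \<le> n" by (simp add: V_def)
    with \<open>v \<in> V n\<close> show ?thesis by (simp add: card_Diff_singleton of_nat_diff)
  qed
  then have "(\<Sum>e\<in>edge_slots n. edge_weight (\<lambda>_. 1) T e) = (\<Sum>v\<in>T. real n - 1)"
    using assms by (simp add: sum_edge_weight)
  then show ?thesis by simp
qed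

lemma card_nbhd_eq_sum_edge_slots:
  "v \<in> V n \<Longrightarrow>
   real (card (nbhd n G v)) = (\<Sum>e\<in>edge_slots n. if G e then edge_weight (\<lambda>_. 1) {v} e else 0)"
  using sum_nbhd_eq_sum_edge_slots[where T = "{v}" and f = "\<lambda>_. 1 :: real"] by simp

lemma maj_step_plus_minus:
  "(\<And>u. S u = 1 \<or> S u = -1) \<Longrightarrow> maj_step n G S v = 1 \<or> maj_step n G S v = -1"
  by (auto simp: maj_step_def Let_def)

lemma maj_step_eq_one_if_few_dissenters:
  assumes S: "\<And>u. S u = 1 \<or> S u = -1"
    and few: "card {u \<in> V n. S u \<noteq> 1} < k"
    and deg: "2 * k < card (nbhd n G v)"
  shows "maj_step n G S v = 1"
proof -
  let ?N = "nbhd n G v" and ?D = "{u \<in> V n. S u \<noteq> 1}"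
  have "(\<Sum>u\<in>?N. S u) = (\<Sum>u\<in>?N. 1 - (if u \<in> ?D then 2 else 0))"
    using nbhd_subset_V S by (intro sum.cong) force+
  also have "\<dots> = int (card ?N) - 2 * int (card (?N \<inter> ?D))"
    by (simp add: sum_subtractf sum.If_cases)
  finally have "(\<Sum>u\<in>?N. S u) = int (card ?N) - 2 * int (card (?N \<inter> ?D))" .
  moreover have "card (?N \<inter> ?D) \<le> card ?D"
    by (intro card_mono) auto
  ultimately have "0 < (\<Sum>u\<in>?N. S u)"
    using few deg by linarith
  then show ?thesis
    by (simp add: maj_step_def)
qed

lemma card_first_round_dissenters_lt:
  assumes "\<And>T. T \<subseteq> V n \<Longrightarrow> card T = k \<Longrightarrow> 0 < (\<Sum>v\<in>T. \<Sum>u\<in>nbhd n G v. init_state P u)"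
  shows "card {v \<in> V n. maj_step n G (init_state P) v \<noteq> 1} < k"
proof (rule ccontr)
  let ?D = "{v \<in> V n. maj_step n G (init_state P) v \<noteq> 1}"
  assume "\<not> card ?D < k"
  then obtain T where T: "T \<subseteq> ?D" "card T = k"
    by (meson not_less obtain_subset_with_card_n)
  have "(\<Sum>u\<in>nbhd n G v. init_state P u) \<le> 0" if "v \<in> T" for v
    using subsetD[OF T(1) that] by (auto simp: maj_step_def Let_def split: if_splits)
  then have "(\<Sum>v\<in>T. \<Sum>u\<in>nbhd n G v. init_state P u) \<le> 0"
    by (rule sum_nonpos)
  moreover have "T \<subseteq> V n"
    using T(1) by blast
  ultimately show False
    using assms[of T] T(2) by linarith
qed

lemma two_round_consensus_if_degree_and_vote_bounds:
  assumes \<delta>: "\<delta> < 1/10"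
    and deg: "\<And>v. v \<in> V n \<Longrightarrow> 2 * k < card (nbhd n G v)"
    and vote: "\<And>P T. P \<subseteq> V n \<Longrightarrow> 10 * card (V n - P) \<le> n \<Longrightarrow> T \<subseteq> V n \<Longrightarrow> card T = k \<Longrightarrow>
                 0 < (\<Sum>v\<in>T. \<Sum>u\<in>nbhd n G v. init_state P u)"
  shows "two_round_consensus \<delta> n G"
  unfolding two_round_consensus_def
proof (intro allI impI exI ballI)
  fix P v
  assume P: "P \<subseteq> V n" "real n * (1 - \<delta>) \<le> real (card P)" and v: "v \<in> V n"
  have "card P \<le> n"
    using card_mono[OF finite_V P(1)] by simp
  moreover have "card (V n - P) = n - card P"
    using P(1) by (simp add: card_Diff_subset finite_subset)
  moreover have "real n * \<delta> \<le> real n * (1/10)"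
    using \<delta> by (intro mult_left_mono) auto
  ultimately have "10 * card (V n - P) \<le> n"
    using P(2) by (simp add: algebra_simps of_nat_diff)
  then have "card {u \<in> V n. maj_step n G (init_state P) u \<noteq> 1} < k"
    using P(1) by (intro card_first_round_dissenters_lt vote)
  then show "maj_step n G (maj_step n G (init_state P)) v = 1"
    using deg[OF v] by (intro maj_step_eq_one_if_few_dissenters maj_step_plus_minus)
      (auto simp: init_state_def)
qed

lemma prob_card_nbhd_le:
  assumes p: "0 \<le> p" "p \<le> 1" and v: "v \<in> V n"
  shows "measure_pmf.prob (gnp n p) {G. card (nbhd n G v) \<le> 2 * k}
           \<le> exp (real k / 2 - p * (real n - 1) / 8)"
proof -
  define w where "w e = - edge_weight (\<lambda>_. 1 :: real) {v} e" for e
  have w_bounds: "-2 \<le> w e" "w e \<le> 0" for e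
    by (auto simp: w_def edge_weight_def)
  have w_abs: "\<bar>1/4 * w e\<bar> \<le> 1" for e
    using w_bounds[of e] by (simp add: abs_le_iff)
  have "(\<Sum>e\<in>edge_slots n. if G e then w e else 0) = - real (card (nbhd n G v))" for G
    by (simp add: card_nbhd_eq_sum_edge_slots[OF v] w_def sum_negf[symmetric] if_distrib
        cong: if_cong)
  then have event_eq: "{G. card (nbhd n G v) \<le> 2 * k}
      = {G. - 2 * real k \<le> (\<Sum>e\<in>edge_slots n. if G e then w e else 0)}"
    by auto
  have "(\<Sum>e\<in>edge_slots n. 1/4 * w e + (1/4 * w e)\<^sup>2) \<le> (\<Sum>e\<in>edge_slots n. 1/8 * w e)"
  proof (rule sum_mono)
    fix e
    have "w e * w e \<le> -2 * w e"
      using mult_right_mono_neg[OF w_bounds(1) w_bounds(2)] by simp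
    then show "1/4 * w e + (1/4 * w e)\<^sup>2 \<le> 1/8 * w e"
      by (simp add: power2_eq_square)
  qed
  also have "\<dots> = 1/8 * (\<Sum>e\<in>edge_slots n. w e)"
    by (simp add: sum_distrib_left)
  also have "(\<Sum>e\<in>edge_slots n. w e) = - (real n - 1)"
    using v by (simp add: w_def sum_negf sum_edge_weight_one)
  finally have "p * (\<Sum>e\<in>edge_slots n. 1/4 * w e + (1/4 * w e)\<^sup>2) \<le> p * (1/8 * - (real n - 1))"
    using p by (intro mult_left_mono) auto
  moreover have "p * (1/8 * - (real n - 1)) = - (p * (real n - 1) / 8)"
    by (simp add: field_simps)
  ultimately have exponent:
    "p * (\<Sum>e\<in>edge_slots n. 1/4 * w e + (1/4 * w e)\<^sup>2) - 1/4 * (- 2 * real k)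
      \<le> real k / 2 - p * (real n - 1) / 8"
    by linarith
  have "measure_pmf.prob (gnp n p) {G. card (nbhd n G v) \<le> 2 * k}
      \<le> exp (p * (\<Sum>e\<in>edge_slots n. 1/4 * w e + (1/4 * w e)\<^sup>2) - 1/4 * (- 2 * real k))"
    unfolding event_eq gnp_eq_Pi_pmf_edge_slots
    using p w_abs by (intro prob_Pi_bernoulli_weighted_sum_ge) auto
  then show ?thesis
    using exponent by (meson exp_le_cancel_iff order_trans)
qed

lemma sum_init_state_V:
  "P \<subseteq> V n \<Longrightarrow> (\<Sum>u\<in>V n. real_of_int (init_state P u)) = real n - 2 * real (card (V n - P))"
proof -
  assume P: "P \<subseteq> V n"
  have "(\<Sum>u\<in>V n. real_of_int (init_state P u)) = real (card P) - real (card (V n - P))"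
    by (subst sum.subset_diff[OF P finite_V]) (simp add: init_state_def)
  moreover have "card P + card (V n - P) = n"
    using P by (metis card_V card_Diff_subset card_mono finite_V finite_subset le_add_diff_inverse)
  ultimately show ?thesis by linarith
qed

lemma sum_edge_weight_init_state_le:
  assumes P: "P \<subseteq> V n" and T: "T \<subseteq> V n"
  shows "(\<Sum>e\<in>edge_slots n. edge_weight (\<lambda>u. - real_of_int (init_state P u)) T e)
           \<le> real (card T) * (2 * real (card (V n - P)) - real n + 1)"
proof -
  have "(\<Sum>u\<in>V n - {v}. - real_of_int (init_state P u)) \<le> 2 * real (card (V n - P)) - real n + 1"
    if "v \<in> T" for v
  proof -
    have "v \<in> V n"
      using that T by blast
    then have "(\<Sum>u\<in>V n - {v}. - real_of_int (init_state P u))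
        = real_of_int (init_state P v) - (\<Sum>u\<in>V n. real_of_int (init_state P u))"
      by (simp add: sum_diff1 sum_negf)
    then show ?thesis
      using sum_init_state_V[OF P] by (simp add: init_state_def)
  qed
  then have "(\<Sum>v\<in>T. \<Sum>u\<in>V n - {v}. - real_of_int (init_state P u))
      \<le> (\<Sum>v\<in>T. 2 * real (card (V n - P)) - real n + 1)"
    by (rule sum_mono)
  then show ?thesis
    using T by (simp add: sum_edge_weight)
qed

lemma prob_first_round_vote_nonpos:
  assumes p: "0 \<le> p" "p \<le> 1" and n: "3 \<le> n"
    and P: "P \<subseteq> V n" "10 * card (V n - P) \<le> n" and T: "T \<subseteq> V n" "card T = k"
  shows "measure_pmf.prob (gnp n p) {G. (\<Sum>v\<in>T. \<Sum>u\<in>nbhd n G v. init_state P u) \<le> 0}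
           \<le> exp (- (p * real k * real n) / 25)"
proof -
  define w where "w = edge_weight (\<lambda>u. - real_of_int (init_state P u)) T"
  have w_abs: "\<bar>1/5 * w e\<bar> \<le> 1" and w_sq: "(w e)\<^sup>2 \<le> 2 * edge_weight (\<lambda>_. 1) T e" for e
    by (auto simp: w_def edge_weight_def init_state_def)
  have weighted_sum: "(\<Sum>e\<in>edge_slots n. if G e then w e else 0)
      = - real_of_int (\<Sum>v\<in>T. \<Sum>u\<in>nbhd n G v. init_state P u)" for G
    unfolding w_def sum_nbhd_eq_sum_edge_slots[OF T(1), symmetric]
    by (simp add: sum_negf)
  have event_eq: "{G. (\<Sum>v\<in>T. \<Sum>u\<in>nbhd n G v. init_state P u) \<le> 0}
      = {G. 0 \<le> (\<Sum>e\<in>edge_slots n. if G e then w e else 0)}"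
    unfolding weighted_sum by (simp del: of_int_sum)
  define m where "m = real (card (V n - P))"
  have sum_w: "(\<Sum>e\<in>edge_slots n. w e) \<le> real k * (2 * m - real n + 1)"
    using sum_edge_weight_init_state_le[OF P(1) T(1)] T(2) by (simp add: w_def m_def)
  have "(\<Sum>e\<in>edge_slots n. (w e)\<^sup>2) \<le> (\<Sum>e\<in>edge_slots n. 2 * edge_weight (\<lambda>_. 1) T e)"
    by (rule sum_mono) (rule w_sq)
  then have sum_w_sq: "(\<Sum>e\<in>edge_slots n. (w e)\<^sup>2) \<le> 2 * (real k * (real n - 1))"
    using T by (simp add: sum_distrib_left[symmetric] sum_edge_weight_one)
  have "(\<Sum>e\<in>edge_slots n. 1/5 * w e + (1/5 * w e)\<^sup>2)
      = 1/5 * (\<Sum>e\<in>edge_slots n. w e) + 1/25 * (\<Sum>e\<in>edge_slots n. (w e)\<^sup>2)"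
    by (simp add: sum.distrib sum_distrib_left power_mult_distrib power_divide)
  also have "\<dots> \<le> real k * ((2 * m - real n + 1) / 5 + 2 * (real n - 1) / 25)"
    using sum_w sum_w_sq by (simp add: field_simps)
  also have "\<dots> \<le> real k * (- real n / 25)"
    using P(2) n by (intro mult_left_mono) (auto simp: m_def field_simps)
  finally have exponent: "(\<Sum>e\<in>edge_slots n. 1/5 * w e + (1/5 * w e)\<^sup>2) \<le> real k * (- real n / 25)" .
  have "measure_pmf.prob (gnp n p) {G. 0 \<le> (\<Sum>e\<in>edge_slots n. if G e then w e else 0)}
      \<le> exp (p * (\<Sum>e\<in>edge_slots n. 1/5 * w e + (1/5 * w e)\<^sup>2) - 1/5 * 0)"
    unfolding gnp_eq_Pi_pmf_edge_slots
    using p w_abs by (intro prob_Pi_bernoulli_weighted_sum_ge) auto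
  also have "\<dots> \<le> exp (- (p * real k * real n) / 25)"
  proof -
    have "p * (real k * (- real n / 25)) = - (p * real k * real n) / 25"
      by simp
    then show ?thesis
      using mult_left_mono[OF exponent p(1)] by (subst exp_le_cancel_iff) linarith
  qed
  finally show ?thesis
    unfolding event_eq .
qed

lemma measure_pmf_UN_le_card_mult:
  assumes "finite I" "\<And>i. i \<in> I \<Longrightarrow> measure_pmf.prob M (A i) \<le> b"
  shows "measure_pmf.prob M (\<Union>i\<in>I. A i) \<le> real (card I) * b"
proof -
  have "measure_pmf.prob M (\<Union>i\<in>I. A i) \<le> (\<Sum>i\<in>I. measure_pmf.prob M (A i))"
    using assms(1) by (intro measure_pmf.finite_measure_subadditive_finite) auto
  also have "\<dots> \<le> real (card I) * b"
    using assms(2) by (rule sum_bounded_above)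
  finally show ?thesis .
qed

lemma prob_not_two_round_consensus_le:
  assumes p: "0 \<le> p" "p \<le> 1" and \<delta>: "\<delta> < 1/10" and n: "3 \<le> n"
  shows "measure_pmf.prob (gnp n p) {G. \<not> two_round_consensus \<delta> n G}
           \<le> real n * exp (real k / 2 - p * (real n - 1) / 8)
              + 4 ^ n * exp (- (p * real k * real n) / 25)"
proof -
  let ?M = "gnp n p"
  define I where "I = {P. P \<subseteq> V n \<and> 10 * card (V n - P) \<le> n} \<times> {T. T \<subseteq> V n \<and> card T = k}"
  define low_degree where "low_degree = (\<Union>v\<in>V n. {G. card (nbhd n G v) \<le> 2 * k})"
  define outvoted where
    "outvoted = (\<Union>x\<in>I. {G. (\<Sum>v\<in>snd x. \<Sum>u\<in>nbhd n G v. init_state (fst x) u) \<le> 0})"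
  have "G \<in> low_degree \<union> outvoted" if "\<not> two_round_consensus \<delta> n G" for G
  proof (rule ccontr)
    assume G: "G \<notin> low_degree \<union> outvoted"
    have "two_round_consensus \<delta> n G"
    proof (rule two_round_consensus_if_degree_and_vote_bounds[OF \<delta>])
      show "2 * k < card (nbhd n G v)" if "v \<in> V n" for v
        using G that by (auto simp: low_degree_def)
      show "0 < (\<Sum>v\<in>T. \<Sum>u\<in>nbhd n G v. init_state P u)"
        if "P \<subseteq> V n" "10 * card (V n - P) \<le> n" "T \<subseteq> V n" "card T = k" for P T
      proof -
        have "(P, T) \<in> I"
          using that by (simp add: I_def)
        then show ?thesis
          using G by (auto simp: outvoted_def)
      qed
    qed
    with that show False ..
  qed
  then have "{G. \<not> two_round_consensus \<delta> n G} \<subseteq> low_degree \<union> outvoted"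
    by blast
  then have "measure_pmf.prob ?M {G. \<not> two_round_consensus \<delta> n G}
      \<le> measure_pmf.prob ?M (low_degree \<union> outvoted)"
    by (rule measure_pmf.finite_measure_mono) simp
  also have "\<dots> \<le> measure_pmf.prob ?M low_degree + measure_pmf.prob ?M outvoted"
    by (rule measure_subadditive) (simp_all add: measure_pmf.emeasure_finite)
  finally have "measure_pmf.prob ?M {G. \<not> two_round_consensus \<delta> n G}
      \<le> measure_pmf.prob ?M low_degree + measure_pmf.prob ?M outvoted" .
  moreover have "measure_pmf.prob ?M low_degree \<le> real n * exp (real k / 2 - p * (real n - 1) / 8)"
    unfolding low_degree_def
    using measure_pmf_UN_le_card_mult[OF finite_V prob_card_nbhd_le[OF p]] by simp
  moreover have "measure_pmf.prob ?M outvoted \<le> 4 ^ n * exp (- (p * real k * real n) / 25)"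
  proof -
    have I_sub: "I \<subseteq> Pow (V n) \<times> Pow (V n)"
      by (auto simp: I_def)
    have "card I \<le> 4 ^ n"
      using card_mono[OF _ I_sub]
      by (simp add: card_cartesian_product card_Pow power_mult_distrib[symmetric])
    then have "real (card I) \<le> 4 ^ n"
      by (metis of_nat_le_iff of_nat_numeral of_nat_power)
    moreover have "measure_pmf.prob ?M outvoted \<le> real (card I) * exp (- (p * real k * real n) / 25)"
      unfolding outvoted_def using finite_subset[OF I_sub]
      by (intro measure_pmf_UN_le_card_mult prob_first_round_vote_nonpos p n) (auto simp: I_def)
    ultimately show ?thesis
      by (meson exp_ge_zero mult_right_mono order_trans)
  qed
  ultimately show ?thesis by linarith
qed

lemma prob_not_two_round_consensus_le_sqrt:
  assumes p: "0 \<le> p" "p \<le> 1" and \<delta>: "\<delta> < 1/10" and n: "3 \<le> n"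
    and dense: "100 * sqrt (real n) \<le> real n * p"
  shows "measure_pmf.prob (gnp n p) {G. \<not> two_round_consensus \<delta> n G}
           \<le> real n * exp (1 - 12 * sqrt (real n)) + 4 ^ n * exp (- 4 * real n)"
proof -
  define k where "k = nat \<lceil>sqrt (real n)\<rceil>"
  have "real k = real_of_int \<lceil>sqrt (real n)\<rceil>"
    by (simp add: k_def)
  then have k: "sqrt (real n) \<le> real k" "real k \<le> sqrt (real n) + 1"
    by linarith+
  have "p * (real n - 1) = real n * p - p"
    by (simp add: algebra_simps)
  then have "real k / 2 - p * (real n - 1) / 8 \<le> 1 - 12 * sqrt (real n)"
    using k dense p by linarith
  then have degree_term:
    "real n * exp (real k / 2 - p * (real n - 1) / 8) \<le> real n * exp (1 - 12 * sqrt (real n))"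
    by (intro mult_left_mono) auto
  have "100 * real n \<le> p * real k * real n"
  proof -
    have "100 * real n = 100 * sqrt (real n) * sqrt (real n)"
      by simp
    also have "\<dots> \<le> (real n * p) * real k"
      by (rule mult_mono) (use dense k p in auto)
    finally show ?thesis by (simp add: algebra_simps)
  qed
  then have vote_term:
    "4 ^ n * exp (- (p * real k * real n) / 25) \<le> 4 ^ n * exp (- 4 * real n)"
    by (intro mult_left_mono) auto
  show ?thesis
    using prob_not_two_round_consensus_le[OF p \<delta> n, of k] degree_term vote_term by linarith
qed

theorem lemma4p1:
  shows "\<exists>lam::real>0. \<forall>\<delta>::real. \<forall>p::nat \<Rightarrow> real. \<delta> < 1/10 \<longrightarrow>
     (\<forall>n. 0 \<le> p n \<and> p n \<le> 1) \<longrightarrow>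
     (\<forall>\<^sub>F n in sequentially. real n * p n \<ge> lam * sqrt (real n)) \<longrightarrow>
     ((\<lambda>n. measure_pmf.prob (gnp n (p n)) {G. two_round_consensus \<delta> n G})
        \<longlonglongrightarrow> 1)"
proof (intro exI[of _ 100] conjI allI impI)
  fix \<delta> :: real and p :: "nat \<Rightarrow> real"
  assume \<delta>: "\<delta> < 1/10" and p: "\<forall>n. 0 \<le> p n \<and> p n \<le> 1"
    and dense: "\<forall>\<^sub>F n in sequentially. 100 * sqrt (real n) \<le> real n * p n"
  let ?fail = "\<lambda>n. measure_pmf.prob (gnp n (p n)) {G. \<not> two_round_consensus \<delta> n G}"
  define b where "b n = real n * exp (1 - 12 * sqrt (real n)) + 4 ^ n * exp (- 4 * real n)" for n :: nat
  have b_lim: "b \<longlonglongrightarrow> 0"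
    unfolding b_def by real_asymp
  have fail_le_b: "\<forall>\<^sub>F n in sequentially. ?fail n \<le> b n"
    using dense eventually_ge_at_top[of 3]
  proof eventually_elim
    case (elim n)
    then show ?case
      unfolding b_def using p \<delta> by (intro prob_not_two_round_consensus_le_sqrt) auto
  qed
  have "?fail \<longlonglongrightarrow> 0"
    by (rule tendsto_sandwich[OF _ fail_le_b tendsto_const b_lim]) simp
  then have "(\<lambda>n. 1 - ?fail n) \<longlonglongrightarrow> 1"
    using tendsto_diff[OF tendsto_const[of 1]] by fastforce
  moreover have "measure_pmf.prob (gnp n (p n)) {G. two_round_consensus \<delta> n G} = 1 - ?fail n" for n
    using measure_pmf.prob_compl[of "{G. two_round_consensus \<delta> n G}" "gnp n (p n)"]
    by (simp add: Collect_neg_eq Compl_eq_Diff_UNIV)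
  ultimately show "(\<lambda>n. measure_pmf.prob (gnp n (p n)) {G. two_round_consensus \<delta> n G}) \<longlonglongrightarrow> 1"
    by simp
qed simp

end
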